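(* A liner $X$ with $|X|>2$ is hyper-Bolyai if and only if $X$ is $3$-long, hyperaffine, and $3$-ranked.
   Context: A liner is a set $X$ of points with a family of subsets called lines such that any two distinct points lie in a unique line and every line contains at least two points. For distinct $x,y$, $\overline{xy}$ is the line through them and $\overline{xx}:=\{x\}$. A set is flat if it contains $\overline{xy}$ for all its distinct points; $\overline A$ is the smallest flat containing $A$; the rank $\|A\|$ is the smallest cardinality of $B\subseteq X$ with $A\subseteq\overline B$; a plane is a flat of rank 3. A flat $A$ is subparallel to a flat $B$ if $A\subseteq\overline{\{a\}\cup B}$ for every $a\in A$; $A\parallel B$ means each is subparallel to the other. $X$ is hyper-Bolyai if for any plane $P\subseteq X$, concurrent (i.e. distinct and intersecting) lines $A,B\subseteq P$ and point $p\in P\setminus B$, there is a line $\Lambda$ with $p\in\Lambda$, $\Lambda\parallel B$ and $|\Lambda\cap A|=1$. $X$ is $3$-long if every line has at least $3$ points. $X$ is hyperaffine if for all $o,x,y\in X$ and $p\in\overline{xy}\setminus\overline{ox}$ there exists $u\in\overline{oy}$ with $\overline{up}\cap\overline{ox}=\varnothing$. $X$ is $3$-ranked if any flats $A\subseteq B$ with $\|A\|=\|B\|\le3$ are equal. *)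

theory Defs
  imports Main "HOL-Library.Extended_Nat"
begin

definition liner :: "'a set \<Rightarrow> 'a set set \<Rightarrow> bool" where
  "liner X L \<longleftrightarrow>
     (\<forall>l\<in>L. l \<subseteq> X \<and> (\<exists>a b. a \<noteq> b \<and> a \<in> l \<and> b \<in> l)) \<and>
     (\<forall>x\<in>X. \<forall>y\<in>X. x \<noteq> y \<longrightarrow> (\<exists>!l. l \<in> L \<and> x \<in> l \<and> y \<in> l))"

definition Line :: "'a set set \<Rightarrow> 'a \<Rightarrow> 'a \<Rightarrow> 'a set" where
  "Line L x y = (if x = y then {x} else (THE l. l \<in> L \<and> x \<in> l \<and> y \<in> l))"

definition flat :: "'a set \<Rightarrow> 'a set set \<Rightarrow> 'a set \<Rightarrow> bool" where
  "flat X L A \<longleftrightarrow> A \<subseteq> X \<and> (\<forall>x\<in>A. \<forall>y\<in>A. x \<noteq> y \<longrightarrow> Line L x y \<subseteq> A)"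

definition flat_hull :: "'a set \<Rightarrow> 'a set set \<Rightarrow> 'a set \<Rightarrow> 'a set" where
  "flat_hull X L A = \<Inter>{F. flat X L F \<and> A \<subseteq> F}"

definition ecard :: "'a set \<Rightarrow> enat" where
  "ecard B = (if finite B then enat (card B) else \<infinity>)"

definition rank :: "'a set \<Rightarrow> 'a set set \<Rightarrow> 'a set \<Rightarrow> enat" where
  "rank X L A = (INF B \<in> {B. B \<subseteq> X \<and> A \<subseteq> flat_hull X L B}. ecard B)"

definition plane :: "'a set \<Rightarrow> 'a set set \<Rightarrow> 'a set \<Rightarrow> bool" where
  "plane X L P \<longleftrightarrow> flat X L P \<and> rank X L P = 3"

definition subparallel :: "'a set \<Rightarrow> 'a set set \<Rightarrow> 'a set \<Rightarrow> 'a set \<Rightarrow> bool" where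
  "subparallel X L A B \<longleftrightarrow> (\<forall>a\<in>A. A \<subseteq> flat_hull X L ({a} \<union> B))"

definition parallel :: "'a set \<Rightarrow> 'a set set \<Rightarrow> 'a set \<Rightarrow> 'a set \<Rightarrow> bool" where
  "parallel X L A B \<longleftrightarrow> subparallel X L A B \<and> subparallel X L B A"

definition hyper_bolyai :: "'a set \<Rightarrow> 'a set set \<Rightarrow> bool" where
  "hyper_bolyai X L \<longleftrightarrow>
     (\<forall>P A B p. plane X L P \<and> P \<subseteq> X \<and> A \<in> L \<and> B \<in> L \<and> A \<subseteq> P \<and> B \<subseteq> P \<and>
        A \<noteq> B \<and> A \<inter> B \<noteq> {} \<and> p \<in> P - B \<longrightarrow>
        (\<exists>\<Lambda>\<in>L. p \<in> \<Lambda> \<and> parallel X L \<Lambda> B \<and> card (\<Lambda> \<inter> A) = 1))"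

definition three_long :: "'a set set \<Rightarrow> bool" where
  "three_long L \<longleftrightarrow> (\<forall>l\<in>L. \<exists>a b c. a \<in> l \<and> b \<in> l \<and> c \<in> l \<and> a \<noteq> b \<and> a \<noteq> c \<and> b \<noteq> c)"

definition hyperaffine :: "'a set \<Rightarrow> 'a set set \<Rightarrow> bool" where
  "hyperaffine X L \<longleftrightarrow>
     (\<forall>z\<in>X. \<forall>x\<in>X. \<forall>y\<in>X. \<forall>p \<in> Line L x y - Line L z x.
        \<exists>u \<in> Line L z y. Line L u p \<inter> Line L z x = {})"

definition three_ranked :: "'a set \<Rightarrow> 'a set set \<Rightarrow> bool" where
  "three_ranked X L \<longleftrightarrow>
     (\<forall>A B. flat X L A \<and> flat X L B \<and> A \<subseteq> B \<and> rank X L A = rank X L B \<and> rank X L B \<le> 3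
        \<longrightarrow> A = B)"

end

theory Submission
  imports Defs
begin

(* Forward direction: work in the plane spanned by a triangle.  The Bolyai line through a point
   parallel to one side must meet another side, which yields the point u demanded by
   hyperaffinity; it also rules out two-point lines (otherwise the triangle would be a flat with
   three points and no room for that line), and it stays inside any rank-3 flat containing two
   concurrent lines, so such a flat cannot lie properly in a plane.  For flats of rank at most 2,
   3-rankedness holds in every liner.
   Converse: hyperaffinity applied to a suitable triangle gives a line through p in the plane that
   misses B and meets A once; 3-rankedness makes the plane spanned by B and any point off B the
   whole plane, so disjoint coplanar lines are parallel. *)

lemma enat_eq_3_if_le_3_not_le_2: "(x::enat) \<le> 3 \<Longrightarrow> \<not> x \<le> 2 \<Longrightarrow> x = 3"
  by (cases x) (auto simp: numeral_eq_enat)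

locale liner_space =
  fixes X :: "'a set" and L :: "'a set set"
  assumes liner: "liner X L"
begin

lemma line_subset: "l \<in> L \<Longrightarrow> l \<subseteq> X"
  using liner unfolding liner_def by blast

lemma line_two_points: "l \<in> L \<Longrightarrow> \<exists>a b. a \<noteq> b \<and> a \<in> l \<and> b \<in> l"
  using liner unfolding liner_def by blast

lemma line_other_point:
  assumes "l \<in> L"
  obtains b where "b \<in> l" "b \<noteq> a"
  using line_two_points[OF assms] by blast

lemma ex1_line: "x \<in> X \<Longrightarrow> y \<in> X \<Longrightarrow> x \<noteq> y \<Longrightarrow> \<exists>!l. l \<in> L \<and> x \<in> l \<and> y \<in> l"
  using liner unfolding liner_def by simp

lemma Line_in_lines_and_contains:
  assumes "x \<in> X" "y \<in> X" "x \<noteq> y"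
  shows "Line L x y \<in> L \<and> x \<in> Line L x y \<and> y \<in> Line L x y"
  using theI'[OF ex1_line[OF assms]] assms(3) unfolding Line_def by simp

lemma Line_in_lines: "x \<in> X \<Longrightarrow> y \<in> X \<Longrightarrow> x \<noteq> y \<Longrightarrow> Line L x y \<in> L"
  using Line_in_lines_and_contains by blast

lemma left_in_Line: "x \<in> X \<Longrightarrow> y \<in> X \<Longrightarrow> x \<in> Line L x y"
  using Line_in_lines_and_contains[of x y] by (cases "x = y") (auto simp: Line_def)

lemma right_in_Line: "x \<in> X \<Longrightarrow> y \<in> X \<Longrightarrow> y \<in> Line L x y"
  using Line_in_lines_and_contains[of x y] by (cases "x = y") (auto simp: Line_def)

lemma Line_eq_line:
  assumes "l \<in> L" "x \<in> l" "y \<in> l" "x \<noteq> y"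
  shows "Line L x y = l"
proof -
  have "x \<in> X" "y \<in> X" using assms line_subset by auto
  then show ?thesis using ex1_line Line_in_lines_and_contains assms by blast
qed

lemma lines_eq_if_two_common_points:
  "l \<in> L \<Longrightarrow> m \<in> L \<Longrightarrow> x \<in> l \<Longrightarrow> x \<in> m \<Longrightarrow> y \<in> l \<Longrightarrow> y \<in> m \<Longrightarrow> x \<noteq> y \<Longrightarrow> l = m"
  using Line_eq_line by metis

lemma lines_inter_eq_singleton:
  "l \<in> L \<Longrightarrow> m \<in> L \<Longrightarrow> l \<noteq> m \<Longrightarrow> x \<in> l \<Longrightarrow> x \<in> m \<Longrightarrow> l \<inter> m = {x}"
  using lines_eq_if_two_common_points by blast

lemma Line_commute: "x \<in> X \<Longrightarrow> y \<in> X \<Longrightarrow> Line L x y = Line L y x"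
  using Line_eq_line[OF Line_in_lines] left_in_Line right_in_Line
  by (metis Line_def)

lemma Line_subset_carrier: "x \<in> X \<Longrightarrow> y \<in> X \<Longrightarrow> Line L x y \<subseteq> X"
  using line_subset[OF Line_in_lines] by (cases "x = y") (auto simp: Line_def)

lemma Line_self: "Line L x x = {x}"
  by (simp add: Line_def)

lemma not_in_Line_rotate:
  assumes "a \<in> X" "b \<in> X" "c \<in> X" "a \<noteq> b" "c \<notin> Line L a b"
  shows "a \<notin> Line L b c"
proof
  assume a: "a \<in> Line L b c"
  have "b \<noteq> c"
    using assms(5) right_in_Line[OF assms(1,2)] by blast
  then have "Line L a b = Line L b c"
    using Line_eq_line[OF Line_in_lines[OF assms(2,3)] a left_in_Line[OF assms(2,3)] assms(4)] by blast
  then show False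
    using assms(5) right_in_Line[OF assms(2,3)] by simp
qed

lemma flat_line: "l \<in> L \<Longrightarrow> flat X L l"
  unfolding flat_def using line_subset Line_eq_line by auto

lemma flat_carrier: "flat X L X"
  unfolding flat_def using Line_subset_carrier by auto

lemma Line_subset_flat: "flat X L F \<Longrightarrow> x \<in> F \<Longrightarrow> y \<in> F \<Longrightarrow> Line L x y \<subseteq> F"
  unfolding flat_def by (cases "x = y") (auto simp: Line_def)

lemma Line_within_flat:
  assumes "flat X L F" "u \<in> F" "p \<in> F" "u \<noteq> p"
  shows "Line L u p \<in> L" "u \<in> Line L u p" "p \<in> Line L u p" "Line L u p \<subseteq> F"
proof -
  have "u \<in> X" "p \<in> X"
    using assms(1-3) unfolding flat_def by auto
  then show "Line L u p \<in> L" "u \<in> Line L u p" "p \<in> Line L u p"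
    using Line_in_lines left_in_Line right_in_Line assms(4) by auto
  show "Line L u p \<subseteq> F"
    using Line_subset_flat assms(1-3) by blast
qed

lemma flat_flat_hull:
  assumes "A \<subseteq> X"
  shows "flat X L (flat_hull X L A)"
proof -
  have "flat_hull X L A \<subseteq> X"
    unfolding flat_hull_def using flat_carrier assms by blast
  moreover have "Line L x y \<subseteq> F"
    if "x \<in> flat_hull X L A" "y \<in> flat_hull X L A" "x \<noteq> y" "flat X L F" "A \<subseteq> F" for x y F
    using that unfolding flat_hull_def flat_def by blast
  ultimately show ?thesis
    unfolding flat_def flat_hull_def by blast
qed

lemma flat_hull_superset: "A \<subseteq> flat_hull X L A"
  unfolding flat_hull_def by auto

lemma flat_hull_least: "flat X L F \<Longrightarrow> A \<subseteq> F \<Longrightarrow> flat_hull X L A \<subseteq> F"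
  unfolding flat_hull_def by auto

lemma flat_hull_mono: "A \<subseteq> B \<Longrightarrow> flat_hull X L A \<subseteq> flat_hull X L B"
  unfolding flat_hull_def by auto

lemma flat_hull_eq: "flat X L F \<Longrightarrow> flat_hull X L F = F"
  using flat_hull_least flat_hull_superset by blast

lemma flat_hull_empty: "flat_hull X L {} = {}"
  using flat_hull_eq unfolding flat_def by blast

lemma flat_hull_singleton: "a \<in> X \<Longrightarrow> flat_hull X L {a} = {a}"
  using flat_hull_eq unfolding flat_def by blast

lemma Line_subset_flat_hull:
  "C \<subseteq> X \<Longrightarrow> x \<in> C \<Longrightarrow> y \<in> C \<Longrightarrow> Line L x y \<subseteq> flat_hull X L C"
  using Line_subset_flat[OF flat_flat_hull] flat_hull_superset by blast

lemma flat_hull_pair: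
  assumes "a \<in> X" "b \<in> X" "a \<noteq> b"
  shows "flat_hull X L {a, b} = Line L a b"
proof
  show "flat_hull X L {a, b} \<subseteq> Line L a b"
    by (rule flat_hull_least[OF flat_line[OF Line_in_lines[OF assms]]])
      (simp add: assms left_in_Line right_in_Line)
  show "Line L a b \<subseteq> flat_hull X L {a, b}"
    by (rule Line_subset_flat_hull) (use assms in auto)
qed

definition collinear :: "'a set \<Rightarrow> bool" where
  "collinear A \<longleftrightarrow> (\<forall>a\<in>A. \<forall>b\<in>A. \<forall>c\<in>A. a \<noteq> b \<longrightarrow> c \<in> Line L a b)"

lemma rank_le_enat_iff:
  "rank X L A \<le> enat n \<longleftrightarrow> (\<exists>C. C \<subseteq> X \<and> finite C \<and> card C \<le> n \<and> A \<subseteq> flat_hull X L C)"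
proof
  assume le: "rank X L A \<le> enat n"
  show "\<exists>C. C \<subseteq> X \<and> finite C \<and> card C \<le> n \<and> A \<subseteq> flat_hull X L C"
  proof (rule ccontr)
    assume "\<not> ?thesis"
    then have "enat (Suc n) \<le> ecard C" if "C \<subseteq> X" "A \<subseteq> flat_hull X L C" for C
      using that by (auto simp: ecard_def) (meson not_less_eq_eq)
    then have "enat (Suc n) \<le> rank X L A"
      unfolding rank_def by (rule INF_greatest) auto
    then have "enat (Suc n) \<le> enat n"
      using le by (rule order_trans)
    then show False by simp
  qed
next
  assume "\<exists>C. C \<subseteq> X \<and> finite C \<and> card C \<le> n \<and> A \<subseteq> flat_hull X L C"
  then obtain C where C: "C \<subseteq> X" "finite C" "card C \<le> n" "A \<subseteq> flat_hull X L C" by blast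
  have "rank X L A \<le> ecard C"
    unfolding rank_def by (rule INF_lower) (use C in auto)
  also have "\<dots> \<le> enat n"
    using C by (simp add: ecard_def)
  finally show "rank X L A \<le> enat n" .
qed

lemma rank_le_card: "C \<subseteq> X \<Longrightarrow> finite C \<Longrightarrow> A \<subseteq> flat_hull X L C \<Longrightarrow> rank X L A \<le> enat (card C)"
  using rank_le_enat_iff by blast

lemma collinear_flat_hull_if_card_le_2:
  assumes "C \<subseteq> X" "finite C" "card C \<le> 2"
  shows "collinear (flat_hull X L C)"
  unfolding collinear_def
proof (intro ballI impI)
  fix a b c
  assume abc: "a \<in> flat_hull X L C" "b \<in> flat_hull X L C" "c \<in> flat_hull X L C" "a \<noteq> b"
  have "card C = 0 \<or> card C = 1 \<or> card C = 2"
    using assms(3) by auto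
  then consider "C = {}" | x where "C = {x}" | x y where "C = {x, y}" "x \<noteq> y"
    using assms(2) by (auto simp: card_1_singleton_iff card_2_iff)
  then show "c \<in> Line L a b"
  proof cases
    case 1
    then show ?thesis using abc flat_hull_empty by simp
  next
    case 2
    then show ?thesis using abc assms(1) flat_hull_singleton by simp
  next
    case (3 x y)
    then have hull: "flat_hull X L C = Line L x y"
      using flat_hull_pair assms(1) by simp
    then have "Line L a b = Line L x y"
      using Line_eq_line[OF Line_in_lines] abc 3 assms(1) by simp
    then show ?thesis using abc hull by simp
  qed
qed

lemma collinear_if_rank_le_2: "rank X L A \<le> 2 \<Longrightarrow> collinear A"
  using rank_le_enat_iff[of A 2] collinear_flat_hull_if_card_le_2
  unfolding numeral_eq_enat collinear_def by blast

lemma rank_le_2_if_collinear: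
  assumes "A \<subseteq> X" "collinear A"
  shows "rank X L A \<le> 2"
proof (cases "\<exists>a\<in>A. \<exists>b\<in>A. a \<noteq> b")
  case True
  then obtain a b where ab: "a \<in> A" "b \<in> A" "a \<noteq> b" by blast
  moreover have "flat_hull X L {a, b} = Line L a b"
    using ab assms(1) flat_hull_pair by auto
  ultimately have "A \<subseteq> flat_hull X L {a, b}"
    using assms(2) unfolding collinear_def by auto
  then have "rank X L A \<le> enat (card {a, b})"
    using ab assms(1) by (intro rank_le_card) auto
  then show ?thesis using ab by (simp add: numeral_eq_enat numeral_2_eq_2)
next
  case False
  then obtain a where sub: "A \<subseteq> {a}" by blast
  then have fin: "finite A"
    by (rule finite_subset) simp
  have "rank X L A \<le> enat (card A)"
    using rank_le_card[OF assms(1) fin flat_hull_superset] .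
  also have "\<dots> \<le> enat (card {a})"
    using card_mono[OF _ sub] by simp
  also have "\<dots> \<le> 2"
    by (simp add: numeral_eq_enat)
  finally show ?thesis .
qed

lemma plane_flat_hull_triangle:
  assumes "a \<in> X" "b \<in> X" "c \<in> X" "a \<noteq> b" "c \<notin> Line L a b"
  shows "plane X L (flat_hull X L {a, b, c})"
proof -
  let ?P = "flat_hull X L {a, b, c}"
  have "rank X L ?P \<le> enat (card {a, b, c})"
    using assms(1-3) by (intro rank_le_card) auto
  also have "\<dots> \<le> 3"
    by (simp add: card_insert_if numeral_eq_enat)
  finally have "rank X L ?P \<le> 3" .
  moreover have "\<not> collinear ?P"
    using assms flat_hull_superset[of "{a, b, c}"] unfolding collinear_def by blast
  ultimately show ?thesis
    unfolding plane_def
    using flat_flat_hull assms(1-3) collinear_if_rank_le_2 enat_eq_3_if_le_3_not_le_2 by auto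
qed

lemma flat_eq_if_rank_le_2:
  assumes "flat X L A" "A \<subseteq> B" "rank X L B \<le> rank X L A" "rank X L A \<le> 2"
  shows "A = B"
proof -
  have AX: "A \<subseteq> X" using assms(1) unfolding flat_def by blast
  consider "A = {}" | a where "A = {a}" | a b where "a \<in> A" "b \<in> A" "a \<noteq> b"
    by blast
  then show ?thesis
  proof cases
    case 1
    then have "rank X L B \<le> enat 0"
      using assms(3) rank_le_card[of "{}" A] by simp
    then show ?thesis
      using 1 flat_hull_empty rank_le_enat_iff[of B 0] by auto
  next
    case (2 a)
    then have "rank X L B \<le> enat 1"
      using assms(3) AX rank_le_card[of A A] flat_hull_superset by fastforce
    then obtain C where C: "C \<subseteq> X" "finite C" "card C \<le> 1" "B \<subseteq> flat_hull X L C"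
      unfolding rank_le_enat_iff by blast
    have "card C = 0 \<or> card C = 1"
      using C(3) by auto
    then have "C = {} \<or> (\<exists>x. C = {x})"
      using C(2) by (auto simp: card_1_singleton_iff)
    moreover from this have "B \<subseteq> C"
      using C flat_hull_empty flat_hull_singleton by auto
    ultimately show ?thesis using 2 assms(2) by auto
  next
    case (3 a b)
    have "collinear B"
      using assms(3,4) collinear_if_rank_le_2 by (meson order_trans)
    then have "B \<subseteq> Line L a b"
      using 3 assms(2) unfolding collinear_def by blast
    also have "\<dots> \<subseteq> A"
      using Line_subset_flat[OF assms(1) 3(1,2)] .
    finally show ?thesis using assms(2) by blast
  qed
qed

lemma parallel_disjoint:
  assumes "parallel X L \<Lambda> B" "B \<in> L" "p \<in> \<Lambda>" "p \<notin> B"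
  shows "\<Lambda> \<inter> B = {}"
proof (rule ccontr)
  assume "\<Lambda> \<inter> B \<noteq> {}"
  then obtain q where q: "q \<in> \<Lambda>" "q \<in> B" by blast
  then have "\<Lambda> \<subseteq> flat_hull X L ({q} \<union> B)"
    using assms(1) unfolding parallel_def subparallel_def by blast
  also have "\<dots> = B"
    using q(2) flat_hull_eq[OF flat_line[OF assms(2)]] by (simp add: insert_absorb)
  finally show False using assms(3,4) by blast
qed

lemma plane_subset_flat_hull_point_line:
  assumes "three_ranked X L" "plane X L P" "B \<in> L" "B \<subseteq> P" "x \<in> P" "x \<notin> B"
  shows "P \<subseteq> flat_hull X L ({x} \<union> B)"
proof -
  obtain b1 b2 where b: "b1 \<noteq> b2" "b1 \<in> B" "b2 \<in> B"
    using line_two_points[OF assms(3)] by blast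
  have flatP: "flat X L P"
    using assms(2) unfolding plane_def by blast
  have X: "b1 \<in> X" "b2 \<in> X" "x \<in> X"
    using b assms(3,5) flatP line_subset unfolding flat_def by auto
  have "x \<notin> Line L b1 b2"
    using Line_eq_line[OF assms(3) b(2,3,1)] assms(6) by simp
  then have "plane X L (flat_hull X L {b1, b2, x})"
    using plane_flat_hull_triangle X b(1) by blast
  moreover have "flat_hull X L {b1, b2, x} \<subseteq> P"
    by (rule flat_hull_least[OF flatP]) (use b assms(4,5) in auto)
  ultimately have "flat_hull X L {b1, b2, x} = P"
    using assms(1,2) flatP unfolding three_ranked_def plane_def by auto
  moreover have "flat_hull X L {b1, b2, x} \<subseteq> flat_hull X L ({x} \<union> B)"
    using flat_hull_mono b by auto
  ultimately show ?thesis by simp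
qed

lemma coplanar_disjoint_lines_parallel:
  assumes "three_ranked X L" "plane X L P" "\<Lambda> \<in> L" "B \<in> L" "\<Lambda> \<subseteq> P" "B \<subseteq> P"
    and "\<Lambda> \<inter> B = {}"
  shows "parallel X L \<Lambda> B"
  using plane_subset_flat_hull_point_line[OF assms(1,2)] assms(3-7)
  unfolding parallel_def subparallel_def by blast

lemma hyper_bolyaiE:
  assumes "hyper_bolyai X L" "plane X L P" "A \<in> L" "B \<in> L" "A \<subseteq> P" "B \<subseteq> P" "A \<noteq> B"
    and "z \<in> A" "z \<in> B" "p \<in> P" "p \<notin> B"
  obtains \<Lambda> u where "\<Lambda> \<in> L" "p \<in> \<Lambda>" "parallel X L \<Lambda> B" "\<Lambda> \<inter> A = {u}"
proof -
  have "P \<subseteq> X"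
    using assms(2) unfolding plane_def flat_def by blast
  then have "\<exists>\<Lambda>\<in>L. p \<in> \<Lambda> \<and> parallel X L \<Lambda> B \<and> card (\<Lambda> \<inter> A) = 1"
    by (intro hyper_bolyai_def[THEN iffD1, rule_format, OF assms(1)]) (use assms in auto)
  then show ?thesis
    using that by (auto simp: card_1_singleton_iff)
qed

lemma hyper_bolyai_hyperaffine_triangle:
  assumes hb: "hyper_bolyai X L" and X: "x \<in> X" "y \<in> X" "z \<in> X"
    and xy: "x \<noteq> y" and z: "z \<notin> Line L x y"
    and p: "p \<in> Line L x y" "p \<notin> Line L z x" "p \<notin> Line L z y"
  shows "\<exists>u\<in>Line L z y. Line L u p \<inter> Line L z x = {}"
proof -
  have "z \<noteq> x" "z \<noteq> y"
    using z left_in_Line[OF X(1,2)] right_in_Line[OF X(1,2)] by auto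
  then have lines: "Line L z y \<in> L" "Line L z x \<in> L"
    using Line_in_lines X by auto
  let ?P = "flat_hull X L {x, y, z}"
  have plane: "plane X L ?P"
    using plane_flat_hull_triangle[OF X xy z] .
  have in_plane: "Line L z y \<subseteq> ?P" "Line L z x \<subseteq> ?P" "p \<in> ?P"
    using Line_subset_flat_hull[of "{x, y, z}"] X p(1) by auto
  have "x \<notin> Line L z y"
    using not_in_Line_rotate[OF X xy z] Line_commute[OF X(2,3)] by simp
  then have "Line L z y \<noteq> Line L z x"
    using right_in_Line[OF X(3,1)] by blast
  then obtain \<Lambda> u where \<Lambda>: "\<Lambda> \<in> L" "p \<in> \<Lambda>" "parallel X L \<Lambda> (Line L z x)"
    and u: "\<Lambda> \<inter> Line L z y = {u}"
    using hyper_bolyaiE[OF hb plane lines in_plane(1,2) _ left_in_Line[OF X(3,2)]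
        left_in_Line[OF X(3,1)] in_plane(3) p(2)] by blast
  have "Line L u p = \<Lambda>"
    using Line_eq_line[OF \<Lambda>(1) _ \<Lambda>(2)] u p(3) by blast
  moreover have "\<Lambda> \<inter> Line L z x = {}"
    using parallel_disjoint[OF \<Lambda>(3) lines(2) \<Lambda>(2) p(2)] .
  ultimately show ?thesis
    using u by blast
qed

lemma hyper_bolyai_hyperaffine:
  assumes hb: "hyper_bolyai X L"
  shows "hyperaffine X L"
  unfolding hyperaffine_def
proof (intro ballI)
  fix z x y p
  assume X: "z \<in> X" "x \<in> X" "y \<in> X" and p: "p \<in> Line L x y - Line L z x"
  show "\<exists>u\<in>Line L z y. Line L u p \<inter> Line L z x = {}"
  proof (cases "p \<in> Line L z y")
    case True
    then show ?thesis
      using p by (intro bexI[of _ p]) (auto simp: Line_self)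
  next
    case False
    have xy: "x \<noteq> y"
      using p right_in_Line[OF X(1,2)] by (auto simp: Line_self)
    have "z \<notin> Line L x y"
    proof
      assume "z \<in> Line L x y"
      moreover have "z \<noteq> x"
        using p False by auto
      ultimately have "Line L z x = Line L x y"
        using Line_eq_line[OF Line_in_lines[OF X(2,3) xy] _ left_in_Line[OF X(2,3)]] by blast
      then show False
        using p by simp
    qed
    then show ?thesis
      using hyper_bolyai_hyperaffine_triangle[OF hb X(2,3,1) xy] p False by blast
  qed
qed

lemma hyper_bolyai_not_flat_triangle:
  assumes hb: "hyper_bolyai X L" and X: "a \<in> X" "b \<in> X" "c \<in> X"
    and ab: "a \<noteq> b" and c: "c \<notin> Line L a b"
  shows "\<not> flat X L {a, b, c}"
proof
  assume "flat X L {a, b, c}"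
  then have hull: "flat_hull X L {a, b, c} = {a, b, c}"
    by (rule flat_hull_eq)
  have plane: "plane X L {a, b, c}"
    using plane_flat_hull_triangle[OF X ab c] hull by simp
  have "a \<noteq> c"
    using c left_in_Line[OF X(1,2)] by blast
  then have lines: "Line L a b \<in> L" "Line L a c \<in> L"
    using Line_in_lines X ab by auto
  have in_plane: "Line L a b \<subseteq> {a, b, c}" "Line L a c \<subseteq> {a, b, c}"
    using Line_subset_flat_hull[of "{a, b, c}"] X hull by auto
  have "b \<noteq> c"
    using c right_in_Line[OF X(1,2)] by blast
  then have "b \<notin> Line L c a"
    using not_in_Line_rotate[OF X(2,3,1)] not_in_Line_rotate[OF X ab c] by blast
  then have b: "b \<notin> Line L a c"
    using Line_commute[OF X(1,3)] by simp
  then have "Line L a b \<noteq> Line L a c"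
    using right_in_Line[OF X(1,2)] by blast
  then obtain \<Lambda> where \<Lambda>: "\<Lambda> \<in> L" "b \<in> \<Lambda>" "parallel X L \<Lambda> (Line L a c)"
    using hyper_bolyaiE[OF hb plane lines in_plane _ left_in_Line[OF X(1,2)]
        left_in_Line[OF X(1,3)] _ b] by blast
  have "\<Lambda> \<subseteq> flat_hull X L ({b} \<union> Line L a c)"
    using \<Lambda>(2,3) unfolding parallel_def subparallel_def by blast
  also have "\<dots> \<subseteq> {a, b, c}"
    using flat_hull_mono[of "{b} \<union> Line L a c" "{a, b, c}"] in_plane(2) hull by auto
  finally have "\<Lambda> \<subseteq> {b}"
    using parallel_disjoint[OF \<Lambda>(3) lines(2) \<Lambda>(2) b] left_in_Line[OF X(1,3)]
      right_in_Line[OF X(1,3)] by blast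
  then show False
    using line_two_points[OF \<Lambda>(1)] by auto
qed

lemma hyper_bolyai_Line_subset_pair:
  assumes hb: "hyper_bolyai X L" and l: "l \<in> L" "l = {a, b}" "a \<noteq> b"
    and c: "c \<in> X" "c \<notin> l"
  shows "Line L b c \<subseteq> {b, c}"
proof
  fix p assume p: "p \<in> Line L b c"
  show "p \<in> {b, c}"
  proof (rule ccontr)
    assume p_new: "p \<notin> {b, c}"
    have X: "a \<in> X" "b \<in> X"
      using l line_subset by auto
    have l_Line: "Line L a b = l"
      using Line_eq_line[OF l(1)] l by auto
    have lines: "Line L a c \<in> L" "Line L b c \<in> L"
      using Line_in_lines X c l by auto
    let ?P = "flat_hull X L {a, b, c}"
    have plane: "plane X L ?P"
      using plane_flat_hull_triangle[OF X c(1) l(3)] l_Line c(2) by simp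
    have in_plane: "l \<subseteq> ?P" "Line L a c \<subseteq> ?P" "p \<in> ?P"
      using Line_subset_flat_hull[of "{a, b, c}"] X c(1) p l_Line by auto
    have "a \<notin> Line L b c"
      using not_in_Line_rotate[OF X c(1) l(3)] l_Line c(2) by simp
    then have "Line L a c \<inter> Line L b c = {c}"
      using lines_inter_eq_singleton[OF lines] left_in_Line[OF X(1) c(1)]
        right_in_Line[OF X(1) c(1)] right_in_Line[OF X(2) c(1)] by blast
    then have p_ac: "p \<notin> Line L a c"
      using p p_new by blast
    have "l \<noteq> Line L a c"
      using c(2) right_in_Line[OF X(1) c(1)] by blast
    then obtain \<Lambda> x where \<Lambda>: "\<Lambda> \<in> L" "p \<in> \<Lambda>" "parallel X L \<Lambda> (Line L a c)"
      and x: "\<Lambda> \<inter> l = {x}"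
      using hyper_bolyaiE[OF hb plane l(1) lines(1) in_plane(1,2) _ _ left_in_Line[OF X(1) c(1)]
          in_plane(3) p_ac] l(2) by blast
    have disjoint: "\<Lambda> \<inter> Line L a c = {}"
      using parallel_disjoint[OF \<Lambda>(3) lines(1) \<Lambda>(2) p_ac] .
    then have "x = b"
      using x l(2) left_in_Line[OF X(1) c(1)] by auto
    then have "\<Lambda> = Line L b c"
      using lines_eq_if_two_common_points[OF \<Lambda>(1) lines(2) _ left_in_Line[OF X(2) c(1)] \<Lambda>(2) p]
        x p_new by auto
    then show False
      using disjoint right_in_Line[OF X(1) c(1)] right_in_Line[OF X(2) c(1)] by blast
  qed
qed

lemma hyper_bolyai_three_long:
  assumes hb: "hyper_bolyai X L"
    and X3: "\<exists>a b c. a \<in> X \<and> b \<in> X \<and> c \<in> X \<and> a \<noteq> b \<and> a \<noteq> c \<and> b \<noteq> c"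
  shows "three_long L"
  unfolding three_long_def
proof
  fix l assume l: "l \<in> L"
  show "\<exists>a b c. a \<in> l \<and> b \<in> l \<and> c \<in> l \<and> a \<noteq> b \<and> a \<noteq> c \<and> b \<noteq> c"
  proof (rule ccontr)
    assume "\<not> ?thesis"
    moreover obtain a b where ab: "a \<noteq> b" "a \<in> l" "b \<in> l"
      using line_two_points[OF l] by blast
    ultimately have l_eq: "l = {a, b}" by blast
    then obtain c where c: "c \<in> X" "c \<notin> l"
      using X3 by blast
    have X: "a \<in> X" "b \<in> X"
      using l ab line_subset by auto
    have l_Line: "Line L a b = l"
      using Line_eq_line[OF l ab(2,3,1)] .
    have "Line L a c \<subseteq> {a, c}"
      using hyper_bolyai_Line_subset_pair[OF hb l _ _ c, of b a] l_eq ab(1) by auto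
    moreover have "Line L b c \<subseteq> {b, c}"
      using hyper_bolyai_Line_subset_pair[OF hb l l_eq ab(1) c] .
    ultimately have "flat X L {a, b, c}"
      unfolding flat_def
      using X c(1) l_Line l_eq Line_commute[OF X] Line_commute[OF X(1) c(1)]
        Line_commute[OF X(2) c(1)] by auto
    then show False
      using hyper_bolyai_not_flat_triangle[OF hb X c(1) ab(1)] l_Line c(2) by blast
  qed
qed

lemma hyper_bolyai_flat_eq_plane:
  assumes hb: "hyper_bolyai X L" and flatA: "flat X L A" and plane: "plane X L B" and AB: "A \<subseteq> B"
    and abc: "a \<in> A" "b \<in> A" "c \<in> A" "a \<noteq> b" "c \<notin> Line L a b"
  shows "A = B"
proof (rule ccontr)
  assume "A \<noteq> B"
  then obtain q where q: "q \<in> B" "q \<notin> A"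
    using AB by blast
  have X: "a \<in> X" "b \<in> X" "c \<in> X"
    using flatA abc unfolding flat_def by auto
  have "a \<noteq> c"
    using abc(5) left_in_Line[OF X(1,2)] by auto
  then have lines: "Line L a b \<in> L" "Line L a c \<in> L"
    using Line_in_lines X abc(4) by auto
  have in_A: "Line L a b \<subseteq> A" "Line L a c \<subseteq> A"
    using Line_subset_flat[OF flatA] abc by auto
  have "Line L a b \<noteq> Line L a c"
    using abc(5) right_in_Line[OF X(1,3)] by blast
  then obtain \<Lambda> r where \<Lambda>: "\<Lambda> \<in> L" "q \<in> \<Lambda>" "parallel X L \<Lambda> (Line L a c)"
    and r: "\<Lambda> \<inter> Line L a b = {r}"
    using hyper_bolyaiE[OF hb plane lines _ _ _ left_in_Line[OF X(1,2)] left_in_Line[OF X(1,3)] q(1)]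
      in_A AB q(2) by blast
  have "\<Lambda> \<subseteq> flat_hull X L ({r} \<union> Line L a c)"
    using \<Lambda>(3) r unfolding parallel_def subparallel_def by blast
  also have "\<dots> \<subseteq> A"
    by (rule flat_hull_least[OF flatA]) (use r in_A in auto)
  finally show False
    using \<Lambda>(2) q(2) by blast
qed

lemma hyper_bolyai_three_ranked:
  assumes hb: "hyper_bolyai X L"
  shows "three_ranked X L"
  unfolding three_ranked_def
proof (intro allI impI, elim conjE)
  fix A B
  assume flatA: "flat X L A" and flatB: "flat X L B" and AB: "A \<subseteq> B"
    and rank_eq: "rank X L A = rank X L B" and rank_B: "rank X L B \<le> 3"
  show "A = B"
  proof (cases "rank X L A \<le> 2")
    case True
    then show ?thesis
      using flat_eq_if_rank_le_2[OF flatA AB] rank_eq by simp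
  next
    case False
    have "A \<subseteq> X"
      using flatA unfolding flat_def by blast
    then obtain a b c where "a \<in> A" "b \<in> A" "c \<in> A" "a \<noteq> b" "c \<notin> Line L a b"
      using False rank_le_2_if_collinear unfolding collinear_def by blast
    moreover have "plane X L B"
      using flatB rank_B False rank_eq enat_eq_3_if_le_3_not_le_2 unfolding plane_def by auto
    ultimately show ?thesis
      using hyper_bolyai_flat_eq_plane[OF hb flatA _ AB] by blast
  qed
qed

lemma hyperaffineD:
  assumes "hyperaffine X L" "z \<in> X" "x \<in> X" "y \<in> X" "p \<in> Line L x y" "p \<notin> Line L z x"
  obtains u where "u \<in> Line L z y" "Line L u p \<inter> Line L z x = {}"
  using assms unfolding hyperaffine_def by blast

lemma disjoint_line_through_point:
  assumes "three_long L" "hyperaffine X L" "flat X L P" "B \<in> L" "B \<subseteq> P" "z \<in> B"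
    and "p \<in> P" "p \<notin> B"
  obtains \<Lambda> where "\<Lambda> \<in> L" "p \<in> \<Lambda>" "\<Lambda> \<subseteq> P" "\<Lambda> \<inter> B = {}"
proof -
  obtain b where b: "b \<in> B" "b \<noteq> z"
    using line_other_point[OF assms(4)] by blast
  have X: "z \<in> X" "b \<in> X" "p \<in> X"
    using assms(3,5-7) b(1) unfolding flat_def by auto
  have "b \<noteq> p"
    using b(1) assms(8) by blast
  note M = Line_within_flat[OF assms(3) subsetD[OF assms(5) b(1)] assms(7) this]
  obtain y where y: "y \<in> Line L b p" "y \<noteq> b" "y \<noteq> p"
    using assms(1) M unfolding three_long_def by metis
  have yX: "y \<in> X"
    using y(1) Line_subset_carrier X(2,3) by blast
  have B_zb: "Line L z b = B"
    using Line_eq_line[OF assms(4,6) b(1)] b(2) by auto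
  have "Line L b y = Line L b p"
    using Line_eq_line[OF M(1,2) y(1) y(2)[symmetric]] .
  then obtain u where u: "u \<in> Line L z y" "Line L u p \<inter> B = {}"
    using hyperaffineD[OF assms(2) X(1,2) yX, of p] B_zb M(3) assms(8) by auto
  have "z \<notin> Line L b p"
    using not_in_Line_rotate[OF X b(2)[symmetric]] B_zb assms(8) by blast
  moreover have "Line L y p = Line L b p"
    using Line_eq_line[OF M(1) y(1) M(3) y(3)] .
  ultimately have "y \<notin> Line L p z"
    using not_in_Line_rotate[OF yX X(3,1) y(3)] by simp
  moreover have "p \<noteq> z"
    using assms(6,8) by blast
  ultimately have "p \<notin> Line L z y"
    using not_in_Line_rotate[OF X(3,1) yX] by blast
  then have "u \<noteq> p"
    using u(1) by blast
  have "u \<in> P"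
    using Line_subset_flat[OF assms(3)] M(4) assms(5,6) y(1) u(1) by blast
  note \<Lambda> = Line_within_flat[OF assms(3) this assms(7) \<open>u \<noteq> p\<close>]
  show ?thesis
    using that[OF \<Lambda>(1,3,4) u(2)] .
qed

lemma disjoint_line_meeting_line:
  assumes "hyperaffine X L" "flat X L P" "A \<in> L" "B \<in> L" "A \<subseteq> P" "B \<subseteq> P" "A \<noteq> B"
    and "z \<in> A" "z \<in> B" "p \<in> P" "p \<notin> A" "p \<notin> B"
  obtains \<Lambda> where "\<Lambda> \<in> L" "p \<in> \<Lambda>" "\<Lambda> \<subseteq> P" "\<Lambda> \<inter> B = {}" "\<Lambda> \<inter> A \<noteq> {}"
proof -
  obtain a where a: "a \<in> A" "a \<noteq> z"
    using line_other_point[OF assms(3)] by blast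
  have X: "z \<in> X" "a \<in> X" "p \<in> X"
    using assms(2,5,8,10) a(1) unfolding flat_def by auto
  have "a \<noteq> p"
    using a(1) assms(11) by blast
  note M = Line_within_flat[OF assms(2) subsetD[OF assms(5) a(1)] assms(10) this]
  show ?thesis
  proof (cases "Line L a p \<inter> B = {}")
    case True
    then show ?thesis
      using that[OF M(1,3,4)] M(2) a(1) by blast
  next
    case False
    then obtain b where b: "b \<in> Line L a p" "b \<in> B"
      by blast
    have bX: "b \<in> X"
      using b(2) line_subset[OF assms(4)] by blast
    have "a \<notin> B"
      using lines_eq_if_two_common_points[OF assms(3,4) a(1) _ assms(8,9)] a(2) assms(7) by blast
    have "b \<noteq> z"
      using lines_eq_if_two_common_points[OF M(1) assms(3) M(2) a(1) _ assms(8)] b(1) a(2) M(3) assms(11)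
      by blast
    have "Line L z b = B" "Line L b a = Line L a p" "Line L z a = A"
      using Line_eq_line assms(3,4,8,9) a b M(1,2) \<open>b \<noteq> z\<close> \<open>a \<notin> B\<close> by metis+
    then obtain u where u: "u \<in> A" "Line L u p \<inter> B = {}"
      using hyperaffineD[OF assms(1) X(1) bX X(2), of p] M(3) assms(12) by auto
    have "u \<noteq> p"
      using u(1) assms(11) by blast
    note \<Lambda> = Line_within_flat[OF assms(2) subsetD[OF assms(5) u(1)] assms(10) this]
    show ?thesis
      using that[OF \<Lambda>(1,3,4) u(2)] \<Lambda>(2) u(1) by blast
  qed
qed

lemma disjoint_line_meeting_once:
  assumes "three_long L" "hyperaffine X L" "flat X L P" "A \<in> L" "B \<in> L" "A \<subseteq> P" "B \<subseteq> P"
    and "A \<noteq> B" "z \<in> A" "z \<in> B" "p \<in> P" "p \<notin> B"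
  obtains \<Lambda> where "\<Lambda> \<in> L" "p \<in> \<Lambda>" "\<Lambda> \<subseteq> P" "\<Lambda> \<inter> B = {}" "card (\<Lambda> \<inter> A) = 1"
proof -
  obtain \<Lambda> where \<Lambda>: "\<Lambda> \<in> L" "p \<in> \<Lambda>" "\<Lambda> \<subseteq> P" "\<Lambda> \<inter> B = {}" "\<Lambda> \<inter> A \<noteq> {}"
  proof (cases "p \<in> A")
    case True
    obtain \<Lambda> where "\<Lambda> \<in> L" "p \<in> \<Lambda>" "\<Lambda> \<subseteq> P" "\<Lambda> \<inter> B = {}"
      by (rule disjoint_line_through_point[OF assms(1-3,5,7,10-12)])
    then show ?thesis
      using True by (intro that) auto
  next
    case False
    obtain \<Lambda> where "\<Lambda> \<in> L" "p \<in> \<Lambda>" "\<Lambda> \<subseteq> P" "\<Lambda> \<inter> B = {}" "\<Lambda> \<inter> A \<noteq> {}"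
      by (rule disjoint_line_meeting_line[OF assms(2-10) assms(11) False assms(12)])
    then show ?thesis
      by (rule that)
  qed
  moreover have "\<Lambda> \<noteq> A"
    using \<Lambda>(4) assms(9,10) by blast
  ultimately have "card (\<Lambda> \<inter> A) = 1"
    using lines_inter_eq_singleton[OF \<Lambda>(1) assms(4)] by fastforce
  then show ?thesis
    using that \<Lambda> by blast
qed

lemma hyper_bolyaiI:
  assumes "three_long L" "hyperaffine X L" "three_ranked X L"
  shows "hyper_bolyai X L"
  unfolding hyper_bolyai_def
proof (intro allI impI, elim conjE)
  fix P A B p
  assume plane: "plane X L P" and lines: "A \<in> L" "B \<in> L" "A \<subseteq> P" "B \<subseteq> P" "A \<noteq> B"
    and "A \<inter> B \<noteq> {}" and p: "p \<in> P - B"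
  then obtain z where z: "z \<in> A" "z \<in> B"
    by blast
  have "flat X L P"
    using plane unfolding plane_def by blast
  then obtain \<Lambda> where \<Lambda>: "\<Lambda> \<in> L" "p \<in> \<Lambda>" "\<Lambda> \<subseteq> P" "\<Lambda> \<inter> B = {}" "card (\<Lambda> \<inter> A) = 1"
    using disjoint_line_meeting_once[OF assms(1,2) _ lines z] p by blast
  then show "\<exists>\<Lambda>\<in>L. p \<in> \<Lambda> \<and> parallel X L \<Lambda> B \<and> card (\<Lambda> \<inter> A) = 1"
    using coplanar_disjoint_lines_parallel[OF assms(3) plane \<Lambda>(1) lines(2) \<Lambda>(3) lines(4) \<Lambda>(4)]
    by blast
qed

end

theorem theorem6p9p5:
  assumes "liner X L"
    and "\<exists>a b c. a \<in> X \<and> b \<in> X \<and> c \<in> X \<and> a \<noteq> b \<and> a \<noteq> c \<and> b \<noteq> c"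
  shows "hyper_bolyai X L \<longleftrightarrow> three_long L \<and> hyperaffine X L \<and> three_ranked X L"
proof -
  interpret liner_space X L
    using assms(1) by (rule liner_space.intro)
  show ?thesis
    using hyper_bolyai_three_long[OF _ assms(2)] hyper_bolyai_hyperaffine hyper_bolyai_three_ranked
      hyper_bolyaiI by blast
qed

end
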